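(* Let $U\subseteq\mathbb R^2$ be a convex region and let $b$ be a line segment disjoint from $U$. Let $\varepsilon\ge 0$ and suppose the set $A:=\{\alpha\in[0,2\pi) : U(\alpha)\cap b(\alpha)\neq\emptyset\}$ has Lebesgue measure at most $2\pi-4\varepsilon$. Then $$\int_0^{2\pi}\lvert b(\alpha)\cap U(\alpha)\rvert\,\mathrm d\alpha \le 4\lvert b\rvert\cos\varepsilon .$$
   Context: For a set $X\subseteq\mathbb R^2$ and $\alpha\in[0,2\pi)$, $X(\alpha)=\{x\cos\alpha+y\sin\alpha:(x,y)\in X\}\subseteq\mathbb R$ is the projection of $X$ onto the line through the origin at angle $\alpha$; $\lvert\cdot\rvert$ on subsets of $\mathbb R$ is Lebesgue measure, and $\lvert b\rvert$ is the length of the segment $b$. *)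

theory Defs
  imports "HOL-Analysis.Analysis"
begin

definition proj :: "(real \<times> real) set \<Rightarrow> real \<Rightarrow> real set" where
  "proj X \<alpha> = (\<lambda>(x, y). x * cos \<alpha> + y * sin \<alpha>) ` X"

end

theory Submission
  imports Defs
begin

text \<open>
  Let \<open>\<ell> = dist p q\<close> and choose \<open>\<theta>\<close> with \<open>\<langle>p - q, (cos \<alpha>, sin \<alpha>)\<rangle> = \<ell> cos (\<alpha> - \<theta>)\<close>.
  The integrand is at most \<open>\<ell> \<bar>cos (\<alpha> - \<theta>)\<bar>\<close>, the length of \<open>b(\<alpha>)\<close>, and vanishes outside
  the set \<open>A\<close>. Since \<open>\<bar>cos w\<bar> \<le> sin \<epsilon> + (\<bar>cos w\<bar> - sin \<epsilon>)\<^sup>+\<close>, integrating the constant over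
  \<open>A\<close> and the positive part over the whole circle gives
  \<open>\<ell> (sin \<epsilon> (2\<pi> - 4\<epsilon>) + 4 (cos \<epsilon> - a sin \<epsilon>)) = 4 \<ell> cos \<epsilon>\<close>, where \<open>a = \<pi>/2 - \<epsilon>\<close> is the
  half-width of the arcs on which \<open>\<bar>cos\<bar> > sin \<epsilon>\<close>.

  Measurability: projections of convex sets are intervals, which differ from their interiors by
  at most two points, so the integrand is the slice measure of a Borel subset of the
  \<open>(\<alpha>, t)\<close>-plane; and \<open>A\<close> is Borel because the directions orthogonal to some element of the
  convex set \<open>U - b\<close>, which avoids \<open>0\<close>, form an interval in every window of length \<open>< \<pi>\<close>.
\<close>

definition proj_point :: "real \<times> real \<Rightarrow> real \<Rightarrow> real" where
  "proj_point z \<alpha> = fst z * cos \<alpha> + snd z * sin \<alpha>"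

definition proj_perp :: "real \<times> real \<Rightarrow> real \<Rightarrow> real" where
  "proj_perp z \<alpha> = snd z * cos \<alpha> - fst z * sin \<alpha>"

lemma proj_eq_image_proj_point: "proj X \<alpha> = (\<lambda>z. proj_point z \<alpha>) ` X"
  unfolding proj_def proj_point_def by (auto simp: case_prod_beta)

lemma linear_proj_point: "linear (\<lambda>z. proj_point z \<alpha>)"
  unfolding proj_point_def by (rule linearI) (auto simp: algebra_simps)

lemma continuous_on_proj_point [continuous_intros]:
  fixes f :: "'a::t2_space \<Rightarrow> real"
  assumes "continuous_on S f"
  shows "continuous_on S (\<lambda>x. proj_point z (f x))"
  unfolding proj_point_def using assms by (intro continuous_intros)

lemma proj_point_diff: "proj_point (u - v) \<alpha> = proj_point u \<alpha> - proj_point v \<alpha>"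
  unfolding proj_point_def by (simp add: algebra_simps)

lemma proj_point_uminus: "proj_point (- u) \<alpha> = - proj_point u \<alpha>"
  and proj_perp_uminus: "proj_perp (- u) \<alpha> = - proj_perp u \<alpha>"
  unfolding proj_point_def proj_perp_def by simp_all

lemma proj_point_combination:
  "proj_point (a *\<^sub>R c + b *\<^sub>R d) \<alpha> = a * proj_point c \<alpha> + b * proj_point d \<alpha>"
  and proj_perp_combination:
  "proj_perp (a *\<^sub>R c + b *\<^sub>R d) \<alpha> = a * proj_perp c \<alpha> + b * proj_perp d \<alpha>"
  unfolding proj_point_def proj_perp_def by (simp_all add: algebra_simps)

lemma proj_point_add_angle:
  "proj_point c (\<alpha> + \<delta>) = proj_point c \<alpha> * cos \<delta> + proj_perp c \<alpha> * sin \<delta>"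
  and proj_perp_add_angle:
  "proj_perp c (\<alpha> + \<delta>) = proj_perp c \<alpha> * cos \<delta> - proj_point c \<alpha> * sin \<delta>"
  unfolding proj_point_def proj_perp_def by (simp_all add: sin_add cos_add algebra_simps)

lemma proj_point_sq_add_proj_perp_sq:
  "(proj_point c \<alpha>)\<^sup>2 + (proj_perp c \<alpha>)\<^sup>2 = (fst c)\<^sup>2 + (snd c)\<^sup>2"
proof -
  have "(proj_point c \<alpha>)\<^sup>2 + (proj_perp c \<alpha>)\<^sup>2
      = ((fst c)\<^sup>2 + (snd c)\<^sup>2) * ((sin \<alpha>)\<^sup>2 + (cos \<alpha>)\<^sup>2)"
    unfolding proj_point_def proj_perp_def by algebra
  then show ?thesis by simp
qed

lemma proj_point_proj_perp_eq_0_iff: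
  "proj_point c \<alpha> = 0 \<and> proj_perp c \<alpha> = 0 \<longleftrightarrow> c = 0"
  using proj_point_sq_add_proj_perp_sq[of c \<alpha>]
  by (auto simp: sum_power2_eq_zero_iff prod_eq_iff proj_point_def proj_perp_def)

lemma proj_point_eq_norm_cos:
  obtains \<theta> where "0 \<le> \<theta>" "\<theta> < 2 * pi" "\<And>\<alpha>. proj_point c \<alpha> = norm c * cos (\<alpha> - \<theta>)"
proof (cases "c = 0")
  case True
  then show ?thesis
    using that[of 0] by (simp add: proj_point_def)
next
  case False
  have norm_sq: "(norm c)\<^sup>2 = (fst c)\<^sup>2 + (snd c)\<^sup>2"
    by (simp add: norm_prod_def)
  have "(fst c / norm c)\<^sup>2 + (snd c / norm c)\<^sup>2 = 1"
    using False by (simp add: power_divide add_divide_distrib[symmetric] norm_sq[symmetric])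
  then obtain \<theta> where \<theta>: "0 \<le> \<theta>" "\<theta> < 2 * pi" "fst c / norm c = cos \<theta>" "snd c / norm c = sin \<theta>"
    by (rule sincos_total_2pi)
  then have "fst c = norm c * cos \<theta>" "snd c = norm c * sin \<theta>"
    using False by (simp_all add: field_simps)
  then have "proj_point c \<alpha> = norm c * cos (\<alpha> - \<theta>)" for \<alpha>
    unfolding proj_point_def by (simp add: cos_diff algebra_simps)
  with \<theta> that show ?thesis by blast
qed

lemma abs_proj_point_le_norm: "\<bar>proj_point c \<alpha>\<bar> \<le> norm c"
proof -
  obtain \<theta> where "\<And>\<alpha>. proj_point c \<alpha> = norm c * cos (\<alpha> - \<theta>)"
    using proj_point_eq_norm_cos by blast
  then show ?thesis
    by (simp add: abs_mult mult_left_le)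
qed

lemma proj_closed_segment:
  "proj (closed_segment p q) \<alpha> =
     {min (proj_point p \<alpha>) (proj_point q \<alpha>) .. max (proj_point p \<alpha>) (proj_point q \<alpha>)}"
  unfolding proj_eq_image_proj_point closed_segment_linear_image[OF linear_proj_point, symmetric]
  by (simp add: closed_segment_eq_real_ivl)

lemma is_interval_proj: "convex U \<Longrightarrow> is_interval (proj U \<alpha>)"
  unfolding proj_eq_image_proj_point is_interval_convex_1
  by (rule convex_linear_image[OF linear_proj_point])

subsection \<open>The slice measure\<close>

lemma finite_not_strictly_between:
  fixes X :: "real set"
  shows "finite {t \<in> X. \<not> (\<exists>s\<in>X. \<exists>s'\<in>X. s < t \<and> t < s')}"
proof (rule finite_subset)
  show "{t \<in> X. \<not> (\<exists>s\<in>X. \<exists>s'\<in>X. s < t \<and> t < s')} \<subseteq> {Inf X, Sup X}"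
  proof
    fix t assume "t \<in> {t \<in> X. \<not> (\<exists>s\<in>X. \<exists>s'\<in>X. s < t \<and> t < s')}"
    then have "t \<in> X" and "(\<forall>s\<in>X. t \<le> s) \<or> (\<forall>s\<in>X. s \<le> t)"
      by (auto simp: not_less)
    then show "t \<in> {Inf X, Sup X}"
      by (metis cInf_eq_minimum cSup_eq_maximum insertCI)
  qed
qed simp

definition proj_band :: "real \<times> real \<Rightarrow> real \<times> real \<Rightarrow> (real \<times> real) set" where
  "proj_band p q = {(\<alpha>, t). min (proj_point p \<alpha>) (proj_point q \<alpha>) \<le> t
                             \<and> t \<le> max (proj_point p \<alpha>) (proj_point q \<alpha>)}"

text \<open>For convex \<open>U\<close> the slice of \<open>proj_between U\<close> at \<open>\<alpha>\<close> is the interior of the interval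
  \<open>proj U \<alpha>\<close>; unlike the sets \<open>proj U \<alpha>\<close>, it is open in the \<open>(\<alpha>, t)\<close>-plane.\<close>

definition proj_between :: "(real \<times> real) set \<Rightarrow> (real \<times> real) set" where
  "proj_between U = {(\<alpha>, t). \<exists>x\<in>U. \<exists>y\<in>U. proj_point x \<alpha> < t \<and> t < proj_point y \<alpha>}"

lemma closed_proj_band: "closed (proj_band p q)"
proof -
  have "proj_band p q = {z. min (proj_point p (fst z)) (proj_point q (fst z)) \<le> snd z}
      \<inter> {z. snd z \<le> max (proj_point p (fst z)) (proj_point q (fst z))}"
    unfolding proj_band_def by auto
  also have "closed \<dots>"
    by (intro closed_Int closed_Collect_le continuous_intros continuous_on_min continuous_on_max)
  finally show ?thesis .
qed

lemma open_proj_between: "open (proj_between U)"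
proof -
  have "proj_between U = (\<Union>x\<in>U. \<Union>y\<in>U.
      {z. proj_point x (fst z) < snd z} \<inter> {z. snd z < proj_point y (fst z)})"
    unfolding proj_between_def by auto
  also have "open \<dots>"
    by (intro open_UN ballI open_Int open_Collect_less continuous_intros)
  finally show ?thesis .
qed

lemma proj_band_Int_proj_between_borel:
  "proj_band p q \<inter> proj_between U \<in> sets (lborel \<Otimes>\<^sub>M lborel)"
  unfolding lborel_prod using closed_proj_band open_proj_between
  by (auto intro: borel_closed borel_open)

lemma proj_segment_Int_proj_eq_slice_Un_finite:
  assumes "convex U"
  obtains F where "finite F"
    and "proj (closed_segment p q) \<alpha> \<inter> proj U \<alpha> =
           Pair \<alpha> -` (proj_band p q \<inter> proj_between U) \<union> F"
proof -
  let ?P = "proj U \<alpha>" and ?K = "proj (closed_segment p q) \<alpha>"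
  let ?S = "Pair \<alpha> -` (proj_band p q \<inter> proj_between U)"
  have between: "Pair \<alpha> -` proj_between U = {t. \<exists>s\<in>?P. \<exists>s'\<in>?P. s < t \<and> t < s'}"
    unfolding proj_between_def proj_eq_image_proj_point by auto
  have S: "?S = ?K \<inter> {t. \<exists>s\<in>?P. \<exists>s'\<in>?P. s < t \<and> t < s'}"
    unfolding vimage_Int between unfolding proj_band_def proj_closed_segment by auto
  have "{t. \<exists>s\<in>?P. \<exists>s'\<in>?P. s < t \<and> t < s'} \<subseteq> ?P"
  proof
    fix t assume "t \<in> {t. \<exists>s\<in>?P. \<exists>s'\<in>?P. s < t \<and> t < s'}"
    then obtain s s' where "s \<in> ?P" "s' \<in> ?P" "s \<le> t" "t \<le> s'"
      by (auto intro: less_imp_le)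
    then show "t \<in> ?P"
      using is_interval_proj[OF assms] unfolding is_interval_1 by blast
  qed
  then have "?K \<inter> ?P = ?S \<union> (?K \<inter> ?P - ?S)"
    unfolding S by blast
  moreover have "finite (?K \<inter> ?P - ?S)"
    by (rule finite_subset[OF _ finite_not_strictly_between[of ?P]]) (unfold S, blast)
  ultimately show ?thesis using that by blast
qed

lemma measure_proj_segment_Int_proj:
  assumes "convex U"
  shows "measure lebesgue (proj (closed_segment p q) \<alpha> \<inter> proj U \<alpha>)
       = measure lborel (Pair \<alpha> -` (proj_band p q \<inter> proj_between U))"
proof -
  let ?S = "Pair \<alpha> -` (proj_band p q \<inter> proj_between U)"
  obtain F where F: "finite F" and eq: "proj (closed_segment p q) \<alpha> \<inter> proj U \<alpha> = ?S \<union> F"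
    using proj_segment_Int_proj_eq_slice_Un_finite[OF assms] .
  have S: "?S \<in> sets lborel"
    using sets_Pair1[OF proj_band_Int_proj_between_borel] by simp
  have null: "F \<in> null_sets lborel"
    using F by (rule finite_imp_null_set_lborel)
  have "?S \<union> F \<in> sets lborel"
    using S null by auto
  then have "measure lebesgue (?S \<union> F) = measure lborel (?S \<union> F)"
    by simp
  also have "\<dots> = measure lborel ?S"
    using S null by (intro measure_Un_null_set) auto
  finally show ?thesis unfolding eq .
qed

lemma borel_measurable_measure_proj_segment_Int_proj:
  assumes "convex U"
  shows "(\<lambda>\<alpha>. measure lebesgue (proj (closed_segment p q) \<alpha> \<inter> proj U \<alpha>)) \<in> borel_measurable lborel"
proof -
  have "(\<lambda>\<alpha>. emeasure lborel (Pair \<alpha> -` (proj_band p q \<inter> proj_between U))) \<in> borel_measurable lborel"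
    by (rule lborel.measurable_emeasure_Pair[OF proj_band_Int_proj_between_borel])
  then have "(\<lambda>\<alpha>. measure lborel (Pair \<alpha> -` (proj_band p q \<inter> proj_between U))) \<in> borel_measurable lborel"
    unfolding measure_def by measurable
  then show ?thesis by (simp add: measure_proj_segment_Int_proj[OF assms])
qed

lemma measure_proj_segment_Int_proj_le:
  assumes "convex U"
  shows "measure lebesgue (proj (closed_segment p q) \<alpha> \<inter> proj U \<alpha>)
       \<le> \<bar>proj_point p \<alpha> - proj_point q \<alpha>\<bar>"
proof -
  let ?K = "{min (proj_point p \<alpha>) (proj_point q \<alpha>) .. max (proj_point p \<alpha>) (proj_point q \<alpha>)}"
  have "Pair \<alpha> -` (proj_band p q \<inter> proj_between U) \<subseteq> ?K"
    unfolding proj_band_def by auto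
  then have "measure lborel (Pair \<alpha> -` (proj_band p q \<inter> proj_between U)) \<le> measure lborel ?K"
    by (intro measure_mono_fmeasurable sets_Pair1[OF proj_band_Int_proj_between_borel])
       (auto simp: fmeasurable_def)
  also have "\<dots> = \<bar>proj_point p \<alpha> - proj_point q \<alpha>\<bar>"
    by (simp add: measure_def)
  finally show ?thesis by (simp add: measure_proj_segment_Int_proj[OF assms])
qed

lemma integrable_measure_proj_segment_Int_proj:
  assumes "convex U"
  shows "(\<lambda>\<alpha>. measure lebesgue (proj (closed_segment p q) \<alpha> \<inter> proj U \<alpha>)) integrable_on {a..b}"
proof (rule measurable_bounded_by_integrable_imp_integrable_real)
  show "(\<lambda>\<alpha>. measure lebesgue (proj (closed_segment p q) \<alpha> \<inter> proj U \<alpha>))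
          \<in> borel_measurable (lebesgue_on {a..b})"
    by (intro measurable_restrict_space1 measurable_completion
              borel_measurable_measure_proj_segment_Int_proj assms)
  show "\<bar>measure lebesgue (proj (closed_segment p q) \<alpha> \<inter> proj U \<alpha>)\<bar> \<le> dist p q" for \<alpha>
    using measure_proj_segment_Int_proj_le[OF assms, of p q \<alpha>] abs_proj_point_le_norm[of "p - q" \<alpha>]
    by (simp add: proj_point_diff dist_norm)
qed auto

subsection \<open>Directions in which two projections meet\<close>

lemma convex_combination_normal_between:
  assumes c1: "proj_point c1 x = 0" "proj_perp c1 x > 0"
    and c2: "proj_point c2 y = 0" "proj_perp c2 y > 0"
    and lt: "x < z" "z < y" and xy: "y - x < pi"
  obtains \<mu> where "0 \<le> \<mu>" "\<mu> \<le> 1"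
    and "proj_point ((1 - \<mu>) *\<^sub>R c1 + \<mu> *\<^sub>R c2) z = 0"
    and "proj_perp ((1 - \<mu>) *\<^sub>R c1 + \<mu> *\<^sub>R c2) z > 0"
proof -
  define t1 t2 where "t1 = proj_perp c1 x" and "t2 = proj_perp c2 y"
  have c1z: "proj_point c1 z = t1 * sin (z - x)" "proj_perp c1 z = t1 * cos (z - x)"
    using proj_point_add_angle[of c1 x "z - x"] proj_perp_add_angle[of c1 x "z - x"] c1
    by (simp_all add: t1_def)
  have c2z: "proj_point c2 z = - (t2 * sin (y - z))" "proj_perp c2 z = t2 * cos (y - z)"
    using proj_point_add_angle[of c2 y "z - y"] proj_perp_add_angle[of c2 y "z - y"] c2
    by (simp_all add: t2_def sin_diff cos_diff algebra_simps)
  define A B where "A = t1 * sin (z - x)" and "B = t2 * sin (y - z)"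
  have "sin (z - x) > 0" "sin (y - z) > 0" "sin (y - x) > 0"
    using lt xy by (auto intro!: sin_gt_zero)
  with c1 c2 have AB: "A > 0" "B > 0"
    unfolding A_def B_def t1_def t2_def by simp_all
  have "t1 * t2 * sin (y - x) / (A + B) > 0"
    using AB c1 c2 \<open>sin (y - x) > 0\<close> unfolding t1_def t2_def
    by (intro divide_pos_pos mult_pos_pos add_pos_pos)
  define \<mu> where "\<mu> = A / (A + B)"
  have "1 - \<mu> = B / (A + B)"
    using AB unfolding \<mu>_def by (simp add: field_simps)
  show ?thesis
  proof
    show "0 \<le> \<mu>" "\<mu> \<le> 1"
      using AB unfolding \<mu>_def by (auto simp: field_simps)
    show "proj_point ((1 - \<mu>) *\<^sub>R c1 + \<mu> *\<^sub>R c2) z = 0"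
      using AB unfolding proj_point_combination c1z c2z
      by (simp add: \<mu>_def A_def[symmetric] B_def[symmetric] field_simps)
    have "proj_perp ((1 - \<mu>) *\<^sub>R c1 + \<mu> *\<^sub>R c2) z
        = (B * t1 * cos (z - x) + A * t2 * cos (y - z)) / (A + B)"
      unfolding proj_perp_combination c1z c2z \<open>1 - \<mu> = B / (A + B)\<close> using AB
      by (simp add: \<mu>_def add_divide_distrib)
    also have "B * t1 * cos (z - x) + A * t2 * cos (y - z) = t1 * t2 * sin (y - x)"
      using sin_add[of "y - z" "z - x"] unfolding A_def B_def by (simp add: algebra_simps)
    finally show "proj_perp ((1 - \<mu>) *\<^sub>R c1 + \<mu> *\<^sub>R c2) z > 0"
      using \<open>t1 * t2 * sin (y - x) / (A + B) > 0\<close> by simp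
  qed
qed

text \<open>The angles \<open>\<alpha>\<close> for which the ray from \<open>0\<close> in direction \<open>(- sin \<alpha>, cos \<alpha>)\<close> meets \<open>C\<close>.\<close>

lemma is_interval_angles_normal_to:
  assumes C: "convex C" and ab: "b - a < pi"
  shows "is_interval {\<alpha> \<in> {a..b}. \<exists>c\<in>C. proj_point c \<alpha> = 0 \<and> proj_perp c \<alpha> > 0}"
    (is "is_interval ?I")
  unfolding is_interval_1
proof (intro ballI allI impI)
  fix x y z assume "x \<in> ?I" "y \<in> ?I" and xzy: "x \<le> z \<and> z \<le> y"
  then obtain c1 c2 where c: "c1 \<in> C" "c2 \<in> C"
    and c1: "proj_point c1 x = 0" "proj_perp c1 x > 0"
    and c2: "proj_point c2 y = 0" "proj_perp c2 y > 0"
    and xy: "a \<le> x" "y \<le> b"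
    by auto
  show "z \<in> ?I"
  proof (cases "z = x \<or> z = y")
    case True
    with \<open>x \<in> ?I\<close> \<open>y \<in> ?I\<close> show ?thesis by auto
  next
    case False
    with xzy have lt: "x < z" "z < y" by auto
    obtain \<mu> where "0 \<le> \<mu>" "\<mu> \<le> 1"
      and "proj_point ((1 - \<mu>) *\<^sub>R c1 + \<mu> *\<^sub>R c2) z = 0"
      and "proj_perp ((1 - \<mu>) *\<^sub>R c1 + \<mu> *\<^sub>R c2) z > 0"
      using convex_combination_normal_between[OF c1 c2 lt] ab xy by auto
    moreover have "(1 - \<mu>) *\<^sub>R c1 + \<mu> *\<^sub>R c2 \<in> C"
      using C c \<open>0 \<le> \<mu>\<close> \<open>\<mu> \<le> 1\<close> by (simp add: convex_alt)
    ultimately show ?thesis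
      using lt xy by fastforce
  qed
qed

lemma proj_Int_proj_nonempty_iff:
  assumes "U \<inter> V = {}"
  defines "D \<equiv> (\<Union>u\<in>U. \<Union>v\<in>V. {u - v})"
  shows "proj U \<alpha> \<inter> proj V \<alpha> \<noteq> {} \<longleftrightarrow>
           (\<exists>c\<in>D. proj_point c \<alpha> = 0 \<and> proj_perp c \<alpha> > 0)
         \<or> (\<exists>c\<in>uminus ` D. proj_point c \<alpha> = 0 \<and> proj_perp c \<alpha> > 0)"
proof -
  have "proj U \<alpha> \<inter> proj V \<alpha> \<noteq> {} \<longleftrightarrow> (\<exists>c\<in>D. proj_point c \<alpha> = 0)"
    unfolding proj_eq_image_proj_point D_def by (auto simp: proj_point_diff)
  moreover have "proj_perp c \<alpha> \<noteq> 0" if c: "c \<in> D" and normal: "proj_point c \<alpha> = 0" for c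
  proof -
    obtain u v where "u \<in> U" "v \<in> V" "c = u - v"
      using c unfolding D_def by blast
    with assms(1) have "c \<noteq> 0"
      by (metis IntI empty_iff eq_iff_diff_eq_0)
    with normal show ?thesis
      using proj_point_proj_perp_eq_0_iff by blast
  qed
  ultimately show ?thesis
    by (auto simp: proj_point_uminus proj_perp_uminus linorder_neq_iff)
qed

lemma borel_angles_proj_Int_proj_nonempty:
  assumes U: "convex U" and V: "convex V" and UV: "U \<inter> V = {}"
  shows "{\<alpha>. proj U \<alpha> \<inter> proj V \<alpha> \<noteq> {}} \<in> sets borel"
proof -
  define D where "D = (\<Union>u\<in>U. \<Union>v\<in>V. {u - v})"
  have D: "convex D" "convex (uminus ` D)"
    unfolding D_def using convex_differences[OF U V] by (auto intro: convex_negations)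
  define N where "N C a = {\<alpha> \<in> {a..a + 1}. \<exists>c\<in>C. proj_point c \<alpha> = 0 \<and> proj_perp c \<alpha> > 0}"
    for C :: "(real \<times> real) set" and a :: real
  have "pi > 1" using pi_gt3 by linarith
  then have "N C a \<in> sets borel" if "convex C" for C a
    unfolding N_def using that by (intro real_interval_borel_measurable is_interval_angles_normal_to) auto
  then have "(\<Union>n::int. N D n \<union> N (uminus ` D) n) \<in> sets borel"
    using D by (intro sets.countable_UN) auto
  also have "(\<Union>n::int. N D n \<union> N (uminus ` D) n) = {\<alpha>. proj U \<alpha> \<inter> proj V \<alpha> \<noteq> {}}"
  proof (intro set_eqI iffI)
    fix \<alpha> assume "\<alpha> \<in> (\<Union>n::int. N D n \<union> N (uminus ` D) n)"
    then show "\<alpha> \<in> {\<alpha>. proj U \<alpha> \<inter> proj V \<alpha> \<noteq> {}}"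
      unfolding N_def mem_Collect_eq proj_Int_proj_nonempty_iff[OF UV, folded D_def] by blast
  next
    fix \<alpha> assume "\<alpha> \<in> {\<alpha>. proj U \<alpha> \<inter> proj V \<alpha> \<noteq> {}}"
    then have "\<alpha> \<in> N D \<lfloor>\<alpha>\<rfloor> \<union> N (uminus ` D) \<lfloor>\<alpha>\<rfloor>"
      unfolding N_def mem_Collect_eq proj_Int_proj_nonempty_iff[OF UV, folded D_def] by auto
    then show "\<alpha> \<in> (\<Union>n::int. N D n \<union> N (uminus ` D) n)"
      by blast
  qed
  finally show ?thesis .
qed

subsection \<open>Integrating \<open>\<bar>cos\<bar>\<close> over a set of bounded measure\<close>

text \<open>\<open>cos_cap a w = (cos w - cos a)\<^sup>+\<close> for \<open>\<bar>w\<bar> \<le> \<pi>\<close>.\<close>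

definition cos_cap :: "real \<Rightarrow> real \<Rightarrow> real" where
  "cos_cap a w = cos (max (- a) (min a w)) - cos a"

definition cos_cap_primitive :: "real \<Rightarrow> real \<Rightarrow> real" where
  "cos_cap_primitive a w = sin (max (- a) (min a w)) - max (- a) (min a w) * cos a"

lemma cos_cap_nonneg:
  assumes "0 \<le> a" "a \<le> pi"
  shows "0 \<le> cos_cap a w"
proof -
  have "cos a \<le> cos \<bar>max (- a) (min a w)\<bar>"
    using assms by (subst cos_mono_le_eq) auto
  then show ?thesis unfolding cos_cap_def by simp
qed

lemma cos_le_cos_cap:
  assumes "0 \<le> a" "a \<le> pi" "\<bar>w\<bar> \<le> pi"
  shows "cos w \<le> cos a + cos_cap a w"
proof (cases "\<bar>w\<bar> \<le> a")
  case True
  then have "max (- a) (min a w) = w" by auto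
  then show ?thesis unfolding cos_cap_def by simp
next
  case False
  then have "cos (max (- a) (min a w)) = cos a"
    by (cases "w \<le> 0") (auto simp: max_def min_def)
  moreover have "cos \<bar>w\<bar> \<le> cos a"
    using assms False by (subst cos_mono_le_eq) auto
  ultimately show ?thesis unfolding cos_cap_def by simp
qed

lemma cos_cap_primitive_ge:
  "a \<le> w \<Longrightarrow> 0 \<le> a \<Longrightarrow> cos_cap_primitive a w = sin a - a * cos a"
  and cos_cap_primitive_le:
  "w \<le> - a \<Longrightarrow> 0 \<le> a \<Longrightarrow> cos_cap_primitive a w = - (sin a - a * cos a)"
  unfolding cos_cap_primitive_def by simp_all

lemma continuous_on_cos_cap_primitive [continuous_intros]:
  fixes f :: "'a::t2_space \<Rightarrow> real"
  assumes "continuous_on S f"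
  shows "continuous_on S (\<lambda>x. cos_cap_primitive a (f x))"
  unfolding cos_cap_primitive_def using assms by (intro continuous_intros)

lemma has_real_derivative_cos_cap_primitive:
  assumes "0 \<le> a" "w \<noteq> a" "w \<noteq> - a"
  shows "(cos_cap_primitive a has_real_derivative cos_cap a w) (at w)"
proof -
  consider "\<bar>w\<bar> < a" | "a < w" | "w < - a"
    using assms by linarith
  then show ?thesis
  proof cases
    case 1
    then have "max (- a) (min a w) = w"
      by auto
    then have "cos_cap a w = cos w - 1 * cos a"
      by (simp add: cos_cap_def)
    then have "((\<lambda>w. sin w - w * cos a) has_real_derivative cos_cap a w) (at w)"
      by (auto intro!: derivative_eq_intros)
    then show ?thesis
      by (rule has_field_derivative_transform_within_open[where S = "{- a<..<a}"])
         (use 1 in \<open>auto simp: cos_cap_primitive_def cos_cap_def\<close>)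
  next
    case 2
    have "((\<lambda>_. sin a - a * cos a) has_real_derivative cos_cap a w) (at w)"
      using 2 assms by (simp add: cos_cap_def)
    then show ?thesis
      by (rule has_field_derivative_transform_within_open[where S = "{a<..}"])
         (use 2 assms in \<open>auto simp: cos_cap_primitive_def cos_cap_def\<close>)
  next
    case 3
    have "((\<lambda>_. - (sin a - a * cos a)) has_real_derivative cos_cap a w) (at w)"
      using 3 assms by (simp add: cos_cap_def)
    then show ?thesis
      by (rule has_field_derivative_transform_within_open[where S = "{..<- a}"])
         (use 3 assms in \<open>auto simp: cos_cap_primitive_def cos_cap_def\<close>)
  qed
qed

text \<open>On \<open>[0, 2\<pi>]\<close> this is \<open>(\<bar>cos (x - \<theta>)\<bar> - cos a)\<^sup>+\<close>, since the translates by \<open>k\<pi>\<close>,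
  \<open>\<bar>k\<bar> \<le> 2\<close>, cover \<open>x - \<theta> \<in> (-2\<pi>, 2\<pi>]\<close>.\<close>

definition abs_cos_cap :: "real \<Rightarrow> real \<Rightarrow> real \<Rightarrow> real" where
  "abs_cos_cap a \<theta> x = (\<Sum>k\<in>{-2..2::int}. cos_cap a (x - \<theta> - k * pi))"

lemma int_range_minus_two_two: "{-2..2::int} = {-2, -1, 0, 1, 2}"
  by auto

lemma abs_cos_cap_nonneg:
  "0 \<le> a \<Longrightarrow> a \<le> pi \<Longrightarrow> 0 \<le> abs_cos_cap a \<theta> x"
  unfolding abs_cos_cap_def by (intro sum_nonneg cos_cap_nonneg)

lemma abs_cos_le_abs_cos_cap:
  assumes a: "0 \<le> a" "a \<le> pi" and \<theta>: "0 \<le> \<theta>" "\<theta> < 2 * pi" and x: "0 \<le> x" "x \<le> 2 * pi"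
  shows "\<bar>cos (x - \<theta>)\<bar> \<le> cos a + abs_cos_cap a \<theta> x"
proof -
  define k where "k = \<lfloor>(x - \<theta>) / pi + 1 / 2\<rfloor>"
  define w where "w = x - \<theta> - k * pi"
  have "k \<le> (x - \<theta>) / pi + 1 / 2" "(x - \<theta>) / pi + 1 / 2 < k + 1"
    unfolding k_def by linarith+
  then have "k * pi \<le> x - \<theta> + pi / 2" "x - \<theta> - pi / 2 < k * pi"
    by (simp_all add: field_simps)
  then have w: "\<bar>w\<bar> \<le> pi / 2"
    unfolding w_def abs_le_iff by linarith
  have "k * pi \<le> 5 / 2 * pi"
    using \<open>k * pi \<le> x - \<theta> + pi / 2\<close> \<theta> x by linarith
  then have "real_of_int k \<le> 5 / 2"
    by (rule mult_right_le_imp_le[OF _ pi_gt_zero])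
  have "- 5 / 2 * pi < k * pi"
    using \<open>x - \<theta> - pi / 2 < k * pi\<close> \<theta> x by linarith
  then have "- 5 / 2 < real_of_int k"
    by (rule mult_right_less_imp_less[OF _ pi_ge_zero])
  with \<open>real_of_int k \<le> 5 / 2\<close> have k: "k \<in> {-2..2}"
    by auto
  have "\<bar>cos (x - \<theta>)\<bar> = \<bar>cos w\<bar>"
    unfolding w_def by (simp add: cos_diff mult.commute[of _ pi]) arith
  also have "\<dots> = cos w"
    using w by (intro abs_of_nonneg cos_ge_zero) auto
  also have "\<dots> \<le> cos a + cos_cap a w"
    using w a by (intro cos_le_cos_cap) auto
  also have "cos_cap a w \<le> abs_cos_cap a \<theta> x"
    unfolding abs_cos_cap_def w_def using k a
    by (intro member_le_sum cos_cap_nonneg) auto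
  finally show ?thesis by simp
qed

lemma has_integral_abs_cos_cap:
  assumes a: "0 \<le> a" "a \<le> pi" and \<theta>: "0 \<le> \<theta>" "\<theta> < 2 * pi"
  shows "(abs_cos_cap a \<theta> has_integral 4 * (sin a - a * cos a)) {0..2 * pi}"
proof -
  define F where "F x = (\<Sum>k\<in>{-2..2::int}. cos_cap_primitive a (x - \<theta> - k * pi))" for x
  define S where "S = (\<Union>k\<in>{-2..2::int}. {\<theta> + k * pi + a, \<theta> + k * pi - a})"
  have "(F has_real_derivative abs_cos_cap a \<theta> x) (at x)" if "x \<notin> S" for x
    unfolding F_def abs_cos_cap_def
  proof (intro DERIV_sum)
    fix k :: int assume "k \<in> {-2..2}"
    with that have "x - \<theta> - k * pi \<noteq> a" "x - \<theta> - k * pi \<noteq> - a"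
      unfolding S_def by force+
    moreover have "((\<lambda>x. x - \<theta> - k * pi) has_real_derivative 1) (at x)"
      by (auto intro!: derivative_eq_intros)
    ultimately show "((\<lambda>x. cos_cap_primitive a (x - \<theta> - k * pi))
            has_real_derivative cos_cap a (x - \<theta> - k * pi)) (at x)"
      using DERIV_chain2[OF has_real_derivative_cos_cap_primitive[OF a(1)]] by fastforce
  qed
  moreover have "continuous_on {0..2 * pi} F"
    unfolding F_def by (intro continuous_intros)
  ultimately have "(abs_cos_cap a \<theta> has_integral F (2 * pi) - F 0) {0..2 * pi}"
    by (intro fundamental_theorem_of_calculus_interior_strong[where S = S])
       (auto simp: S_def has_real_derivative_iff_has_vector_derivative)
  also have "F (2 * pi) - F 0 = 4 * (sin a - a * cos a)"
  proof -
    \<comment> \<open>The sum telescopes, leaving only terms where the primitive is constant.\<close>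
    have "F (2 * pi) - F 0 =
        cos_cap_primitive a (4 * pi - \<theta>) + cos_cap_primitive a (3 * pi - \<theta>)
      - cos_cap_primitive a (- \<theta> - pi) - cos_cap_primitive a (- \<theta> - 2 * pi)"
      unfolding F_def int_range_minus_two_two by (simp add: algebra_simps)
    also have "\<dots> = 4 * (sin a - a * cos a)"
      using a \<theta> by (simp add: cos_cap_primitive_ge cos_cap_primitive_le)
    finally show ?thesis .
  qed
  finally show ?thesis .
qed

lemma has_integral_indicator_subset:
  fixes S :: "'a::euclidean_space set"
  assumes "S \<in> lmeasurable" "S \<subseteq> T"
  shows "(indicator S has_integral measure lebesgue S) T"
  using assms integral_indicator[of S T] integrable_on_indicator[of S T]
  by (simp add: has_integral_integrable_integral Int_absorb2)

lemma integral_le_of_le_abs_cos: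
  fixes f :: "real \<Rightarrow> real" and B :: "real set"
  assumes f: "f integrable_on {0..2 * pi}"
    and B: "B \<in> sets lebesgue" "B \<subseteq> {0..2 * pi}" "measure lebesgue B \<le> 2 * pi - 4 * \<epsilon>"
    and \<epsilon>: "0 \<le> \<epsilon>" and L: "0 \<le> L" and \<theta>: "0 \<le> \<theta>" "\<theta> < 2 * pi"
    and on_B: "\<And>x. x \<in> B \<Longrightarrow> f x \<le> L * \<bar>cos (x - \<theta>)\<bar>"
    and off_B: "\<And>x. x \<in> {0..2 * pi} - B \<Longrightarrow> f x \<le> 0"
  shows "integral {0..2 * pi} f \<le> 4 * L * cos \<epsilon>"
proof -
  have "\<epsilon> \<le> pi / 2"
    using B(3) measure_nonneg[of lebesgue B] by linarith
  define a where "a = pi / 2 - \<epsilon>"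
  have a: "0 \<le> a" "a \<le> pi"
    unfolding a_def using \<open>\<epsilon> \<le> pi / 2\<close> \<epsilon> by auto
  have cos_a: "cos a = sin \<epsilon>" and sin_a: "sin a = cos \<epsilon>"
    unfolding a_def by (simp_all add: cos_diff sin_diff)
  have "0 \<le> sin \<epsilon>"
    using \<open>\<epsilon> \<le> pi / 2\<close> \<epsilon> by (intro sin_ge_zero) auto
  have "B \<in> lmeasurable"
    using B(1,2) by (intro bounded_set_imp_lmeasurable bounded_subset[OF bounded_cbox[of 0 "2 * pi"]]) auto
  then have B_int: "(indicator B has_integral measure lebesgue B) {0..2 * pi}"
    using B(2) by (rule has_integral_indicator_subset)
  define g where "g x = L * (sin \<epsilon> * indicator B x + abs_cos_cap a \<theta> x)" for x
  have g_int: "(g has_integral L * (sin \<epsilon> * measure lebesgue B + 4 * (sin a - a * cos a))) {0..2 * pi}"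
    unfolding g_def
    by (intro has_integral_mult_right has_integral_add B_int has_integral_abs_cos_cap a \<theta>)
  have "f x \<le> g x" if x: "x \<in> {0..2 * pi}" for x
  proof (cases "x \<in> B")
    case True
    have "f x \<le> L * \<bar>cos (x - \<theta>)\<bar>"
      using on_B[OF True] .
    also have "\<dots> \<le> L * (cos a + abs_cos_cap a \<theta> x)"
      using x L by (intro mult_left_mono abs_cos_le_abs_cos_cap a \<theta>) auto
    also have "\<dots> = g x"
      unfolding g_def cos_a using True by simp
    finally show ?thesis .
  next
    case False
    then have "f x \<le> 0"
      using x off_B by blast
    also have "0 \<le> g x"
      unfolding g_def using False L abs_cos_cap_nonneg[OF a] by simp
    finally show ?thesis .
  qed
  then have "integral {0..2 * pi} f \<le> L * (sin \<epsilon> * measure lebesgue B + 4 * (sin a - a * cos a))"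
    by (intro has_integral_le[OF integrable_integral[OF f] g_int])
  also have "\<dots> \<le> L * (sin \<epsilon> * (2 * pi - 4 * \<epsilon>) + 4 * (sin a - a * cos a))"
    using B(3) \<open>0 \<le> sin \<epsilon>\<close> L by (intro mult_left_mono add_right_mono) auto
  also have "\<dots> = 4 * L * cos \<epsilon>"
    unfolding sin_a cos_a by (simp add: a_def algebra_simps)
  finally show ?thesis .
qed

lemma measure_lebesgue_insert:
  assumes "S \<in> sets lebesgue"
  shows "measure lebesgue (insert x S) = measure lebesgue S"
proof -
  have "{x} \<in> null_sets lebesgue"
    by simp
  then show ?thesis
    using measure_Un_null_set[OF assms, of "{x}"] by simp
qed

theorem lemma4:
  fixes U :: "(real \<times> real) set" and p q :: "real \<times> real" and \<epsilon> :: real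
  assumes "convex U"
    and "closed_segment p q \<inter> U = {}"
    and "\<epsilon> \<ge> 0"
    and "measure lebesgue {\<alpha> \<in> {0..<2*pi}. proj U \<alpha> \<inter> proj (closed_segment p q) \<alpha> \<noteq> {}}
           \<le> 2*pi - 4*\<epsilon>"
  shows "(\<lambda>\<alpha>. measure lebesgue (proj (closed_segment p q) \<alpha> \<inter> proj U \<alpha>)) integrable_on {0..2*pi}
       \<and> integral {0..2*pi} (\<lambda>\<alpha>. measure lebesgue (proj (closed_segment p q) \<alpha> \<inter> proj U \<alpha>))
           \<le> 4 * dist p q * cos \<epsilon>"
proof
  let ?b = "closed_segment p q"
  define f where "f \<alpha> = measure lebesgue (proj ?b \<alpha> \<inter> proj U \<alpha>)" for \<alpha>
  define A where "A = {\<alpha> \<in> {0..<2*pi}. proj U \<alpha> \<inter> proj ?b \<alpha> \<noteq> {}}"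
  show f_int: "f integrable_on {0..2 * pi}"
    unfolding f_def by (rule integrable_measure_proj_segment_Int_proj[OF assms(1)])
  obtain \<theta> where \<theta>: "0 \<le> \<theta>" "\<theta> < 2 * pi"
    and polar: "\<And>\<alpha>. proj_point (p - q) \<alpha> = dist p q * cos (\<alpha> - \<theta>)"
    using proj_point_eq_norm_cos[of "p - q"] unfolding dist_norm by blast
  have f_le: "f \<alpha> \<le> dist p q * \<bar>cos (\<alpha> - \<theta>)\<bar>" for \<alpha>
    using measure_proj_segment_Int_proj_le[OF assms(1), of p q \<alpha>] polar[of \<alpha>]
    unfolding f_def proj_point_diff by (simp add: abs_mult)
  have "{\<alpha>. proj U \<alpha> \<inter> proj ?b \<alpha> \<noteq> {}} \<in> sets borel"
    using assms(1,2) by (intro borel_angles_proj_Int_proj_nonempty convex_closed_segment) auto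
  then have "A \<in> sets lebesgue"
    unfolding A_def by (simp add: Collect_conj_eq Int_commute)
  \<comment> \<open>\<open>A\<close> omits the endpoint \<open>2\<pi>\<close> of the interval of integration, a null set.\<close>
  then show "integral {0..2 * pi} f \<le> 4 * dist p q * cos \<epsilon>"
    using assms(3,4) f_le \<theta>
    by (intro integral_le_of_le_abs_cos[OF f_int, where B = "insert (2 * pi) A"])
       (auto simp: measure_lebesgue_insert sets.insert_in_sets A_def f_def Int_commute)
qed

end
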